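(* Let $X\in\{0,1\}$ be binary. Assume consistency $Y=Y_X$, conditional ignorability $(Y_0,Y_1)\perp X\mid\boldsymbol Z$, and positivity $0<P(X=1\mid\boldsymbol Z=\boldsymbol z)<1$ for all $\boldsymbol z$. Then $$\mathcal{CI}_X=e_{\mathrm{cond}}-e_{\mathrm{orig}}=2\,\mathbb E_{\boldsymbol Z}\Big(\mathbb V(X\mid\boldsymbol Z)\big[\mathbb E(Y_1\mid\boldsymbol Z)-\mathbb E(Y_0\mid\boldsymbol Z)\big]^2\Big).$$
   Context: Let $O=(Y,X,\boldsymbol Z)$ be a random vector with real outcome $Y$, $\mathbb E[Y^2]<\infty$, predictor/treatment $X$ and covariate vector $\boldsymbol Z$, and $f_0(x,\boldsymbol z)=\mathbb E(Y\mid X=x,\boldsymbol Z=\boldsymbol z)$. Let $(Y^{(a)},X^{(a)},\boldsymbol Z)$ have the law of $O$, and let $X^{(b)}$ be, conditionally on $\boldsymbol Z$, distributed as $X\mid\boldsymbol Z$ and conditionally independent of $(Y^{(a)},X^{(a)})$ given $\boldsymbol Z$. Define $e_{\mathrm{orig}}=\mathbb E[(Y^{(a)}-f_0(X^{(a)},\boldsymbol Z))^2]$, $e_{\mathrm{cond}}=\mathbb E[(Y^{(a)}-f_0(X^{(b)},\boldsymbol Z))^2]$ (assumed finite), and the Conditional Variable Importance Metric (CVIM) $\mathcal{CI}_X=e_{\mathrm{cond}}-e_{\mathrm{orig}}$. $Y_x$ denotes the potential outcome under $X=x$. *)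

theory Defs
  imports "HOL-Probability.Probability"
begin

definition sigma_gen :: "'a measure \<Rightarrow> 'b measure \<Rightarrow> ('a \<Rightarrow> 'b) \<Rightarrow> 'a measure" where
  "sigma_gen M N V = vimage_algebra (space M) V N"

definition cexp :: "'a measure \<Rightarrow> 'z measure \<Rightarrow> ('a \<Rightarrow> 'z) \<Rightarrow> ('a \<Rightarrow> real) \<Rightarrow> ('a \<Rightarrow> real)" where
  "cexp M N Z f = real_cond_exp M (sigma_gen M N Z) f"

definition cprob :: "'a measure \<Rightarrow> 'z measure \<Rightarrow> ('a \<Rightarrow> 'z) \<Rightarrow> ('a \<Rightarrow> 'u) \<Rightarrow> 'u set \<Rightarrow> ('a \<Rightarrow> real)" where
  "cprob M N Z U A = cexp M N Z (\<lambda>\<omega>. indicator A (U \<omega>))"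

definition cvar :: "'a measure \<Rightarrow> 'z measure \<Rightarrow> ('a \<Rightarrow> 'z) \<Rightarrow> ('a \<Rightarrow> real) \<Rightarrow> ('a \<Rightarrow> real)" where
  "cvar M N Z f = cexp M N Z (\<lambda>\<omega>. (f \<omega> - cexp M N Z f \<omega>)\<^sup>2)"

definition cond_indep ::
  "'a measure \<Rightarrow> 'z measure \<Rightarrow> ('a \<Rightarrow> 'z) \<Rightarrow> 'u measure \<Rightarrow> ('a \<Rightarrow> 'u) \<Rightarrow> 'v measure \<Rightarrow> ('a \<Rightarrow> 'v) \<Rightarrow> bool" where
  "cond_indep M N Z P U Q V \<longleftrightarrow>
     (\<forall>A\<in>sets P. \<forall>B\<in>sets Q. AE \<omega> in M.
        cexp M N Z (\<lambda>\<omega>. indicator A (U \<omega>) * indicator B (V \<omega>)) \<omega>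
          = cprob M N Z U A \<omega> * cprob M N Z V B \<omega>)"

definition cond_same_dist ::
  "'a measure \<Rightarrow> 'z measure \<Rightarrow> ('a \<Rightarrow> 'z) \<Rightarrow> 'u measure \<Rightarrow> ('a \<Rightarrow> 'u) \<Rightarrow> ('a \<Rightarrow> 'u) \<Rightarrow> bool" where
  "cond_same_dist M N Z P U V \<longleftrightarrow>
     (\<forall>A\<in>sets P. AE \<omega> in M. cprob M N Z U A \<omega> = cprob M N Z V A \<omega>)"

text \<open>f0 is a version of the regression function E(Y | X = x, Z = z)\<close>
definition is_regression ::
  "'a measure \<Rightarrow> 'z measure \<Rightarrow> ('a \<Rightarrow> real) \<Rightarrow> ('a \<Rightarrow> real) \<Rightarrow> ('a \<Rightarrow> 'z) \<Rightarrow> (real \<Rightarrow> 'z \<Rightarrow> real) \<Rightarrow> bool" where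
  "is_regression M N Y X Z f0 \<longleftrightarrow>
     (\<lambda>(x, z). f0 x z) \<in> borel_measurable (borel \<Otimes>\<^sub>M N) \<and>
     (AE \<omega> in M. f0 (X \<omega>) (Z \<omega>) = cexp M (borel \<Otimes>\<^sub>M N) (\<lambda>\<omega>. (X \<omega>, Z \<omega>)) Y \<omega>)"

end

theory Submission
  imports Defs
begin

text \<open>
  Write \<open>Y - f0(Xb, Z) = R + k\<close> with the residual \<open>R = Y - f0(X, Z)\<close> and
  \<open>k = f0(X, Z) - f0(Xb, Z)\<close>. Given \<open>Z\<close>, the copy \<open>Xb\<close> is independent of
  \<open>(Y, X)\<close>, so in \<open>E(R k)\<close> the indicators of \<open>Xb\<close> may be replaced by their conditional
  probabilities given \<open>Z\<close>; what is left is \<open>R\<close> times a function of \<open>(X, Z)\<close>, which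
  integrates to zero because \<open>f0(X, Z) = E(Y | X, Z)\<close>. Hence \<open>e_cond - e_orig = E k\<^sup>2\<close>.
  For binary treatments \<open>k = \<plusminus>(f0(1, Z) - f0(0, Z))\<close> on the event \<open>X \<noteq> Xb\<close>, whose
  conditional probability given \<open>Z\<close> is \<open>2 p (1 - p) = 2 V(X | Z)\<close> for
  \<open>p = P(X = 1 | Z)\<close>. Finally consistency, ignorability and positivity identify
  \<open>f0(a, Z)\<close> with \<open>E(Y\<^sub>a | Z)\<close>.
\<close>

lemma abs_mult_le_sum_squares: "\<bar>(a::real) * b\<bar> \<le> a\<^sup>2 + b\<^sup>2"
proof -
  have "2 * (\<bar>a\<bar> * \<bar>b\<bar>) \<le> a\<^sup>2 + b\<^sup>2"
    using zero_le_square[of "\<bar>a\<bar> - \<bar>b\<bar>"] by (simp add: power2_eq_square algebra_simps)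
  moreover have "0 \<le> \<bar>a\<bar> * \<bar>b\<bar>" by simp
  ultimately show ?thesis unfolding abs_mult by linarith
qed

lemma integrable_mult_of_square_integrable:
  fixes f g :: "'a \<Rightarrow> real"
  assumes "f \<in> borel_measurable M" "g \<in> borel_measurable M"
    and "integrable M (\<lambda>x. (f x)\<^sup>2)" "integrable M (\<lambda>x. (g x)\<^sup>2)"
  shows "integrable M (\<lambda>x. f x * g x)"
  by (rule Bochner_Integration.integrable_bound[where f="\<lambda>x. (f x)\<^sup>2 + (g x)\<^sup>2"])
    (use assms abs_mult_le_sum_squares in auto)

lemma integrable_square_diff:
  fixes f g :: "'a \<Rightarrow> real"
  assumes "f \<in> borel_measurable M" "g \<in> borel_measurable M"
    and "integrable M (\<lambda>x. (f x)\<^sup>2)" "integrable M (\<lambda>x. (g x)\<^sup>2)"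
  shows "integrable M (\<lambda>x. (f x - g x)\<^sup>2)"
proof -
  have "integrable M (\<lambda>x. (f x)\<^sup>2 + (g x)\<^sup>2 - 2 * (f x * g x))"
    using assms integrable_mult_of_square_integrable[OF assms] by auto
  then show ?thesis by (simp add: power2_diff mult.assoc)
qed

lemma integrable_weight_mult:
  fixes g q Y :: "'a \<Rightarrow> real"
  assumes [measurable]: "g \<in> borel_measurable M" "q \<in> borel_measurable M" "Y \<in> borel_measurable M"
    and q01: "AE \<omega> in M. 0 \<le> q \<omega> \<and> q \<omega> \<le> 1"
    and "integrable M (\<lambda>\<omega>. (g \<omega>)\<^sup>2 * q \<omega>)" "integrable M (\<lambda>\<omega>. (Y \<omega>)\<^sup>2)"
  shows "integrable M (\<lambda>\<omega>. g \<omega> * q \<omega> * Y \<omega>)"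
proof (rule Bochner_Integration.integrable_bound)
  show "integrable M (\<lambda>\<omega>. (Y \<omega>)\<^sup>2 + (g \<omega>)\<^sup>2 * q \<omega>)"
    using assms(5,6) by auto
  show "AE \<omega> in M. norm (g \<omega> * q \<omega> * Y \<omega>) \<le> norm ((Y \<omega>)\<^sup>2 + (g \<omega>)\<^sup>2 * q \<omega>)"
    using q01
  proof eventually_elim
    case (elim \<omega>)
    have "\<bar>g \<omega> * q \<omega> * Y \<omega>\<bar> \<le> (Y \<omega>)\<^sup>2 + (g \<omega>)\<^sup>2 * (q \<omega>)\<^sup>2"
      using abs_mult_le_sum_squares[of "g \<omega> * q \<omega>" "Y \<omega>"] by (simp add: power_mult_distrib)
    also have "\<dots> \<le> (Y \<omega>)\<^sup>2 + (g \<omega>)\<^sup>2 * q \<omega>"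
      using elim by (intro add_left_mono mult_left_mono) (auto simp: power2_eq_square mult_left_le_one_le)
    finally show ?case by simp
  qed
qed simp

lemma
  fixes x x' :: real and g :: "real \<Rightarrow> 'b \<Rightarrow> real"
  assumes "x \<in> {0, 1}" "x' \<in> {0, 1}"
  shows diff_binary_indicators: "g x z - g x' z
      = indicator {1} x * (g 1 z - g 0 z) * indicator {0} x' - indicator {0} x * (g 1 z - g 0 z) * indicator {1} x'"
    and square_diff_binary_indicators: "(g x z - g x' z)\<^sup>2
      = indicator {1} x * (g 1 z - g 0 z)\<^sup>2 * indicator {0} x' + indicator {0} x * (g 1 z - g 0 z)\<^sup>2 * indicator {1} x'"
  using assms by (auto simp: power2_commute)

lemma integral_square_add:
  fixes f g :: "'a \<Rightarrow> real"
  assumes "f \<in> borel_measurable M" "g \<in> borel_measurable M"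
    and "integrable M (\<lambda>x. (f x)\<^sup>2)" "integrable M (\<lambda>x. (g x)\<^sup>2)"
  shows "(\<integral>x. (f x + g x)\<^sup>2 \<partial>M)
      = (\<integral>x. (f x)\<^sup>2 \<partial>M) + 2 * (\<integral>x. f x * g x \<partial>M) + (\<integral>x. (g x)\<^sup>2 \<partial>M)"
proof -
  have "integrable M (\<lambda>x. f x * g x)" by (rule integrable_mult_of_square_integrable[OF assms])
  then show ?thesis
    using assms(3,4) by (simp add: power2_sum mult.assoc)
qed

lemma (in prob_space) integrable_square_cond_exp:
  assumes "sigma_finite_subalgebra M F" "f \<in> borel_measurable M" "integrable M (\<lambda>x. (f x)\<^sup>2)"
  shows "integrable M (\<lambda>x. (real_cond_exp M F f x)\<^sup>2)"
proof -
  interpret sigma_finite_subalgebra M F by fact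
  show ?thesis
    using integrable_convex_cond_exp[OF square_integrable_imp_integrable[OF assms(2,3)], of UNIV 0 0 power2]
      assms(3) convex_power2 by auto
qed

lemma measurable_sigma_gen:
  assumes "Z \<in> measurable M N"
  shows "Z \<in> measurable (sigma_gen M N Z) N"
  unfolding sigma_gen_def using assms by (intro measurable_vimage_algebra1) (auto dest: measurable_space)

lemma
  assumes "X \<in> measurable M P" "Z \<in> measurable M N"
  shows measurable_fst_sigma_gen: "X \<in> measurable (sigma_gen M (P \<Otimes>\<^sub>M N) (\<lambda>\<omega>. (X \<omega>, Z \<omega>))) P"
    and measurable_snd_sigma_gen: "Z \<in> measurable (sigma_gen M (P \<Otimes>\<^sub>M N) (\<lambda>\<omega>. (X \<omega>, Z \<omega>))) N"
proof -
  have "(\<lambda>\<omega>. (X \<omega>, Z \<omega>)) \<in> measurable (sigma_gen M (P \<Otimes>\<^sub>M N) (\<lambda>\<omega>. (X \<omega>, Z \<omega>))) (P \<Otimes>\<^sub>M N)"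
    using assms by (intro measurable_sigma_gen) measurable
  from measurable_fst'[OF this] measurable_snd'[OF this]
  show "X \<in> measurable (sigma_gen M (P \<Otimes>\<^sub>M N) (\<lambda>\<omega>. (X \<omega>, Z \<omega>))) P"
    "Z \<in> measurable (sigma_gen M (P \<Otimes>\<^sub>M N) (\<lambda>\<omega>. (X \<omega>, Z \<omega>))) N"
    by simp_all
qed

lemma measurable_sigma_gen_Pair:
  assumes "X \<in> measurable M P" "Z \<in> measurable M N" "h \<in> measurable (sigma_gen M N Z) K"
  shows "h \<in> measurable (sigma_gen M (P \<Otimes>\<^sub>M N) (\<lambda>\<omega>. (X \<omega>, Z \<omega>))) K"
proof -
  have "(\<lambda>x. x) \<in> measurable (sigma_gen M (P \<Otimes>\<^sub>M N) (\<lambda>\<omega>. (X \<omega>, Z \<omega>))) (sigma_gen M N Z)"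
    using measurable_snd_sigma_gen[OF assms(1,2)] unfolding sigma_gen_def
    by (intro measurable_vimage_algebra2) (auto simp: space_vimage_algebra)
  then show ?thesis using measurable_compose[OF _ assms(3)] by auto
qed

lemma
  shows measurable_fst_borel [measurable]:
    "fst \<in> borel_measurable (borel :: ('a::second_countable_topology \<times> 'b::second_countable_topology) measure)"
    and measurable_snd_borel [measurable]:
    "snd \<in> borel_measurable (borel :: ('a::second_countable_topology \<times> 'b::second_countable_topology) measure)"
  unfolding borel_prod[symmetric] by simp_all

lemma emeasure_distr_density_Times:
  assumes [measurable]: "f \<in> borel_measurable M" "U \<in> measurable M P" "Z \<in> measurable M N"
    "a \<in> sets P" "c \<in> sets N"
  shows "emeasure (distr (density M (\<lambda>\<omega>. ennreal (f \<omega>))) (P \<Otimes>\<^sub>M N) (\<lambda>\<omega>. (U \<omega>, Z \<omega>))) (a \<times> c)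
       = (\<integral>\<^sup>+\<omega>. ennreal (indicator c (Z \<omega>) * indicator a (U \<omega>) * f \<omega>) \<partial>M)"
  by (subst emeasure_distr, simp, simp, subst emeasure_density)
    (auto intro!: nn_integral_cong simp: indicator_def)

lemma cond_indep_sym:
  assumes "cond_indep M N Z P U Q V"
  shows "cond_indep M N Z Q V P U"
  using assms unfolding cond_indep_def by (simp add: mult.commute)

section \<open>Conditional expectation given a random variable\<close>

locale cond_given = prob_space M for M :: "'a measure" +
  fixes N :: "'z measure" and Z :: "'a \<Rightarrow> 'z"
  assumes measurable_Z[measurable]: "Z \<in> measurable M N"
begin

lemma subalgebra_sigma_gen: "subalgebra M (sigma_gen M N Z)"
  unfolding subalgebra_def sigma_gen_def using sets_image_in_sets[OF refl measurable_Z] by simp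

sublocale cond: sigma_finite_subalgebra M "sigma_gen M N Z"
  using subalgebra_sigma_gen finite_measure_axioms
  by (intro finite_measure_subalgebra_is_sigma_finite)
    (simp add: finite_measure_subalgebra_def finite_measure_subalgebra_axioms_def)

lemma sets_sigma_gen: "A \<in> sets (sigma_gen M N Z) \<Longrightarrow> \<exists>C\<in>sets N. A = Z -` C \<inter> space M"
  unfolding sigma_gen_def using sets_vimage_algebra2[of Z "space M" N] measurable_space[OF measurable_Z]
  by auto

lemma measurable_cexp [measurable]:
  "cexp M N Z f \<in> borel_measurable (sigma_gen M N Z)" "cexp M N Z f \<in> borel_measurable M"
  unfolding cexp_def by auto

lemma measurable_cprob [measurable]:
  "cprob M N Z U A \<in> borel_measurable (sigma_gen M N Z)" "cprob M N Z U A \<in> borel_measurable M"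
  unfolding cprob_def by (rule measurable_cexp)+

lemma measurable_comp_Z_sigma_gen [measurable]:
  "h \<in> borel_measurable N \<Longrightarrow> (\<lambda>\<omega>. h (Z \<omega>) :: real) \<in> borel_measurable (sigma_gen M N Z)"
  using measurable_compose[OF measurable_sigma_gen[OF measurable_Z]] by auto

lemma AE_cprob_bounded:
  assumes "U \<in> measurable M P" "A \<in> sets P"
  shows "AE \<omega> in M. 0 \<le> cprob M N Z U A \<omega> \<and> cprob M N Z U A \<omega> \<le> 1"
proof -
  have i: "integrable M (\<lambda>\<omega>. indicator A (U \<omega>) :: real)"
    using assms by (intro integrable_const_bound[where B=1]) auto
  show ?thesis
    using cond.real_cond_exp_ge_c[OF i, of 0] cond.real_cond_exp_le_c[OF i, of 1]
    unfolding cprob_def cexp_def by auto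
qed

lemma integrable_cprob:
  assumes "U \<in> measurable M P" "A \<in> sets P"
  shows "integrable M (cprob M N Z U A)"
  unfolding cprob_def cexp_def using assms
  by (intro cond.real_cond_exp_int integrable_const_bound[where B=1]) auto

lemma
  assumes "h \<in> borel_measurable (sigma_gen M N Z)" "f \<in> borel_measurable M"
    and "integrable M (\<lambda>\<omega>. h \<omega> * f \<omega>)"
  shows integrable_mult_cexp: "integrable M (\<lambda>\<omega>. h \<omega> * cexp M N Z f \<omega>)"
    and integral_mult_cexp: "(\<integral>\<omega>. h \<omega> * cexp M N Z f \<omega> \<partial>M) = (\<integral>\<omega>. h \<omega> * f \<omega> \<partial>M)"
  using cond.real_cond_exp_intg[OF assms(3,1,2)] unfolding cexp_def by auto

section \<open>Conditional independence given \<open>Z\<close>\<close>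

text \<open>
  The definition of \<^const>\<open>cond_indep\<close> only speaks about indicators of \<open>U\<close> and \<open>V\<close>.
  Comparing the image measures of \<open>1{V \<in> B} \<cdot> M\<close> and \<open>P(V \<in> B | Z) \<cdot> M\<close> under
  \<open>(U, Z)\<close> on rectangles extends it to arbitrary integrands \<open>g(U, Z)\<close>.
\<close>

lemma cond_indep_integral_rectangle:
  assumes [measurable]: "U \<in> measurable M P" "V \<in> measurable M Q" "A \<in> sets P" "B \<in> sets Q" "C \<in> sets N"
    and indep: "cond_indep M N Z P U Q V"
  shows "(\<integral>\<omega>. indicator C (Z \<omega>) * indicator A (U \<omega>) * indicator B (V \<omega>) \<partial>M)
       = (\<integral>\<omega>. indicator C (Z \<omega>) * indicator A (U \<omega>) * cprob M N Z V B \<omega> \<partial>M)"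
proof -
  let ?p = "cprob M N Z U A" and ?q = "cprob M N Z V B"
  have "(\<integral>\<omega>. indicator C (Z \<omega>) * indicator A (U \<omega>) * indicator B (V \<omega>) \<partial>M)
      = (\<integral>\<omega>. indicator C (Z \<omega>) * (indicator A (U \<omega>) * indicator B (V \<omega>)) \<partial>M :: real)"
    by (simp only: mult.assoc)
  also have "\<dots> = (\<integral>\<omega>. indicator C (Z \<omega>) * cexp M N Z (\<lambda>\<omega>. indicator A (U \<omega>) * indicator B (V \<omega>)) \<omega> \<partial>M)"
    unfolding cexp_def
    by (rule cond.real_cond_exp_intg(2)[symmetric])
      (auto intro!: integrable_const_bound[where B=1] simp: indicator_def)
  also have "\<dots> = (\<integral>\<omega>. (indicator C (Z \<omega>) * ?q \<omega>) * ?p \<omega> \<partial>M)"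
  proof (rule integral_cong_AE)
    show "AE \<omega> in M. indicator C (Z \<omega>) * cexp M N Z (\<lambda>\<omega>. indicator A (U \<omega>) * indicator B (V \<omega>)) \<omega>
        = indicator C (Z \<omega>) * ?q \<omega> * ?p \<omega>"
    proof -
      have "AE \<omega> in M. cexp M N Z (\<lambda>\<omega>. indicator A (U \<omega>) * indicator B (V \<omega>)) \<omega> = ?p \<omega> * ?q \<omega>"
        using indep \<open>A \<in> sets P\<close> \<open>B \<in> sets Q\<close> unfolding cond_indep_def by blast
      then show ?thesis by eventually_elim (simp add: ac_simps)
    qed
  qed auto
  also have "\<dots> = (\<integral>\<omega>. (indicator C (Z \<omega>) * ?q \<omega>) * indicator A (U \<omega>) \<partial>M)"
  proof -
    have "integrable M (\<lambda>\<omega>. indicator C (Z \<omega>) * ?q \<omega> * indicator A (U \<omega>))"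
      using AE_cprob_bounded[of V Q B]
      by (intro Bochner_Integration.integrable_bound[OF integrable_cprob[of V Q B]])
        (auto elim!: eventually_mono simp: indicator_def)
    then show ?thesis unfolding cprob_def by (intro integral_mult_cexp) auto
  qed
  finally show ?thesis by (simp add: ac_simps)
qed

lemma cond_indep_distr_density_eq:
  assumes [measurable]: "U \<in> measurable M P" "V \<in> measurable M Q" "B \<in> sets Q"
    and indep: "cond_indep M N Z P U Q V"
  shows "distr (density M (\<lambda>\<omega>. ennreal (indicator B (V \<omega>)))) (P \<Otimes>\<^sub>M N) (\<lambda>\<omega>. (U \<omega>, Z \<omega>))
       = distr (density M (\<lambda>\<omega>. ennreal (cprob M N Z V B \<omega>))) (P \<Otimes>\<^sub>M N) (\<lambda>\<omega>. (U \<omega>, Z \<omega>))"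
    (is "distr ?M1 _ ?W = distr ?M2 _ _")
proof (rule measure_eqI_generator_eq[OF Int_stable_pair_measure_generator[of P N],
      where A="\<lambda>_. space P \<times> space N"])
  let ?E = "{a \<times> c |a c. a \<in> sets P \<and> c \<in> sets N}"
  show "?E \<subseteq> Pow (space P \<times> space N)"
    by (auto dest: sets.sets_into_space)
  show "sets (distr ?M1 (P \<Otimes>\<^sub>M N) ?W) = sigma_sets (space P \<times> space N) ?E"
    "sets (distr ?M2 (P \<Otimes>\<^sub>M N) ?W) = sigma_sets (space P \<times> space N) ?E"
    by (simp_all add: sets_pair_measure)
  show "range (\<lambda>i. space P \<times> space N) \<subseteq> ?E" "(\<Union>i. space P \<times> space N) = space P \<times> space N"
    by auto
  have "emeasure (distr ?M1 (P \<Otimes>\<^sub>M N) ?W) (space P \<times> space N)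
      = (\<integral>\<^sup>+\<omega>. ennreal (indicator (space N) (Z \<omega>) * indicator (space P) (U \<omega>) * indicator B (V \<omega>)) \<partial>M)"
    by (rule emeasure_distr_density_Times) auto
  also have "\<dots> \<le> (\<integral>\<^sup>+\<omega>. 1 \<partial>M)"
    by (intro nn_integral_mono) (auto simp: indicator_def)
  finally show "\<And>i. emeasure (distr ?M1 (P \<Otimes>\<^sub>M N) ?W) (space P \<times> space N) \<noteq> \<infinity>"
    using emeasure_space_1 by (auto simp: top_unique)
next
  let ?q = "cprob M N Z V B"
  fix X assume "X \<in> {a \<times> c |a c. a \<in> sets P \<and> c \<in> sets N}"
  then obtain a c where X: "X = a \<times> c" and [measurable]: "a \<in> sets P" "c \<in> sets N" by auto
  have "emeasure (distr ?M1 (P \<Otimes>\<^sub>M N) ?W) X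
      = (\<integral>\<^sup>+\<omega>. ennreal (indicator c (Z \<omega>) * indicator a (U \<omega>) * indicator B (V \<omega>)) \<partial>M)"
    unfolding X by (rule emeasure_distr_density_Times) auto
  also have "\<dots> = ennreal (\<integral>\<omega>. indicator c (Z \<omega>) * indicator a (U \<omega>) * indicator B (V \<omega>) \<partial>M)"
    by (intro nn_integral_eq_integral integrable_const_bound[where B=1]) (auto simp: indicator_def)
  also have "\<dots> = ennreal (\<integral>\<omega>. indicator c (Z \<omega>) * indicator a (U \<omega>) * ?q \<omega> \<partial>M)"
    using cond_indep_integral_rectangle[OF assms(1,2) _ assms(3) _ indep] by simp
  also have "\<dots> = (\<integral>\<^sup>+\<omega>. ennreal (indicator c (Z \<omega>) * indicator a (U \<omega>) * ?q \<omega>) \<partial>M)"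
    using AE_cprob_bounded[of V Q B]
    by (intro nn_integral_eq_integral[symmetric] Bochner_Integration.integrable_bound[OF integrable_cprob[of V Q B]])
      (auto elim!: eventually_mono simp: indicator_def)
  also have "\<dots> = emeasure (distr ?M2 (P \<Otimes>\<^sub>M N) ?W) X"
    unfolding X by (rule emeasure_distr_density_Times[symmetric]) auto
  finally show "emeasure (distr ?M1 (P \<Otimes>\<^sub>M N) ?W) X = emeasure (distr ?M2 (P \<Otimes>\<^sub>M N) ?W) X" .
qed

lemma cond_indep_nn_integral:
  assumes [measurable]: "U \<in> measurable M P" "V \<in> measurable M Q" "B \<in> sets Q"
    "g \<in> borel_measurable (P \<Otimes>\<^sub>M N)"
    and indep: "cond_indep M N Z P U Q V"
  shows "(\<integral>\<^sup>+\<omega>. ennreal (g (U \<omega>, Z \<omega>)) * indicator B (V \<omega>) \<partial>M)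
       = (\<integral>\<^sup>+\<omega>. ennreal (g (U \<omega>, Z \<omega>)) * ennreal (cprob M N Z V B \<omega>) \<partial>M)"
proof -
  let ?W = "\<lambda>\<omega>. (U \<omega>, Z \<omega>)"
  have "(\<integral>\<^sup>+\<omega>. ennreal (g (?W \<omega>)) * indicator B (V \<omega>) \<partial>M)
      = (\<integral>\<^sup>+x. ennreal (g x) \<partial>distr (density M (\<lambda>\<omega>. ennreal (indicator B (V \<omega>)))) (P \<Otimes>\<^sub>M N) ?W)"
    by (simp add: nn_integral_distr nn_integral_density ennreal_indicator mult.commute)
  also have "\<dots> = (\<integral>\<^sup>+x. ennreal (g x) \<partial>distr (density M (\<lambda>\<omega>. ennreal (cprob M N Z V B \<omega>))) (P \<Otimes>\<^sub>M N) ?W)"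
    by (simp only: cond_indep_distr_density_eq[OF assms(1-3) indep])
  also have "\<dots> = (\<integral>\<^sup>+\<omega>. ennreal (g (?W \<omega>)) * ennreal (cprob M N Z V B \<omega>) \<partial>M)"
    by (simp add: nn_integral_distr nn_integral_density mult.commute)
  finally show ?thesis .
qed

lemma
  assumes [measurable]: "U \<in> measurable M P" "V \<in> measurable M Q" "B \<in> sets Q"
    "g \<in> borel_measurable (P \<Otimes>\<^sub>M N)"
    and g_nonneg: "\<And>x. 0 \<le> g x"
    and indep: "cond_indep M N Z P U Q V"
    and int: "integrable M (\<lambda>\<omega>. g (U \<omega>, Z \<omega>) * indicator B (V \<omega>))"
  shows integrable_cond_indep_nonneg: "integrable M (\<lambda>\<omega>. g (U \<omega>, Z \<omega>) * cprob M N Z V B \<omega>)"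
    and integral_cond_indep_nonneg: "(\<integral>\<omega>. g (U \<omega>, Z \<omega>) * indicator B (V \<omega>) \<partial>M)
      = (\<integral>\<omega>. g (U \<omega>, Z \<omega>) * cprob M N Z V B \<omega> \<partial>M)"
proof -
  let ?q = "cprob M N Z V B"
  have q_nonneg: "AE \<omega> in M. 0 \<le> ?q \<omega>" using AE_cprob_bounded[of V Q B] by auto
  have "(\<integral>\<^sup>+\<omega>. ennreal (g (U \<omega>, Z \<omega>) * indicator B (V \<omega>)) \<partial>M)
      = (\<integral>\<^sup>+\<omega>. ennreal (g (U \<omega>, Z \<omega>)) * indicator B (V \<omega>) \<partial>M)"
    by (intro nn_integral_cong) (auto simp: indicator_def)
  also have "\<dots> = (\<integral>\<^sup>+\<omega>. ennreal (g (U \<omega>, Z \<omega>)) * ennreal (?q \<omega>) \<partial>M)"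
    by (rule cond_indep_nn_integral[OF assms(1-4) indep])
  also have "\<dots> = (\<integral>\<^sup>+\<omega>. ennreal (g (U \<omega>, Z \<omega>) * ?q \<omega>) \<partial>M)"
    using q_nonneg by (intro nn_integral_cong_AE) (auto elim!: eventually_mono simp: ennreal_mult g_nonneg)
  finally have nn: "(\<integral>\<^sup>+\<omega>. ennreal (g (U \<omega>, Z \<omega>) * indicator B (V \<omega>)) \<partial>M)
      = (\<integral>\<^sup>+\<omega>. ennreal (g (U \<omega>, Z \<omega>) * ?q \<omega>) \<partial>M)" .
  have prod_nonneg: "AE \<omega> in M. 0 \<le> g (U \<omega>, Z \<omega>) * ?q \<omega>"
    using q_nonneg by eventually_elim (simp add: g_nonneg)
  have "(\<integral>\<^sup>+\<omega>. ennreal (g (U \<omega>, Z \<omega>) * indicator B (V \<omega>)) \<partial>M) < \<infinity>"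
    using int by (simp add: nn_integral_eq_integral g_nonneg)
  then show int_q: "integrable M (\<lambda>\<omega>. g (U \<omega>, Z \<omega>) * ?q \<omega>)"
    using nn prod_nonneg by (intro integrableI_nonneg) auto
  have "ennreal (\<integral>\<omega>. g (U \<omega>, Z \<omega>) * indicator B (V \<omega>) \<partial>M) = ennreal (\<integral>\<omega>. g (U \<omega>, Z \<omega>) * ?q \<omega> \<partial>M)"
    using nn int int_q prod_nonneg by (subst (asm) (1 2) nn_integral_eq_integral) (auto simp: g_nonneg)
  moreover have "0 \<le> (\<integral>\<omega>. g (U \<omega>, Z \<omega>) * ?q \<omega> \<partial>M)"
    using prod_nonneg by (rule integral_nonneg_AE)
  ultimately show "(\<integral>\<omega>. g (U \<omega>, Z \<omega>) * indicator B (V \<omega>) \<partial>M) = (\<integral>\<omega>. g (U \<omega>, Z \<omega>) * ?q \<omega> \<partial>M)"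
    using g_nonneg by (simp add: integral_nonneg)
qed

lemma
  assumes [measurable]: "U \<in> measurable M P" "V \<in> measurable M Q" "B \<in> sets Q"
    "g \<in> borel_measurable (P \<Otimes>\<^sub>M N)"
    and indep: "cond_indep M N Z P U Q V"
    and int: "integrable M (\<lambda>\<omega>. g (U \<omega>, Z \<omega>) * indicator B (V \<omega>))"
  shows integrable_cond_indep: "integrable M (\<lambda>\<omega>. g (U \<omega>, Z \<omega>) * cprob M N Z V B \<omega>)"
    and integral_cond_indep: "(\<integral>\<omega>. g (U \<omega>, Z \<omega>) * indicator B (V \<omega>) \<partial>M)
      = (\<integral>\<omega>. g (U \<omega>, Z \<omega>) * cprob M N Z V B \<omega> \<partial>M)"
proof -
  define gp where "gp x = max 0 (g x)" for x
  define gm where "gm x = max 0 (- g x)" for x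
  have gpm[measurable]: "gp \<in> borel_measurable (P \<Otimes>\<^sub>M N)"
    and gmm[measurable]: "gm \<in> borel_measurable (P \<Otimes>\<^sub>M N)"
    unfolding gp_def gm_def by measurable
  have gp_nonneg: "0 \<le> gp x" and gm_nonneg: "0 \<le> gm x" for x by (auto simp: gp_def gm_def)
  have g_split: "g x = gp x - gm x" for x by (auto simp: gp_def gm_def)
  have "integrable M (\<lambda>\<omega>. gp (U \<omega>, Z \<omega>) * indicator B (V \<omega>))"
    "integrable M (\<lambda>\<omega>. gm (U \<omega>, Z \<omega>) * indicator B (V \<omega>))"
    by (auto intro!: Bochner_Integration.integrable_bound[OF int] simp: gp_def gm_def indicator_def)
  note p = this(1) integrable_cond_indep_nonneg[OF assms(1-3) gpm gp_nonneg indep this(1)]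
      integral_cond_indep_nonneg[OF assms(1-3) gpm gp_nonneg indep this(1)]
    and m = this(2) integrable_cond_indep_nonneg[OF assms(1-3) gmm gm_nonneg indep this(2)]
      integral_cond_indep_nonneg[OF assms(1-3) gmm gm_nonneg indep this(2)]
  show "integrable M (\<lambda>\<omega>. g (U \<omega>, Z \<omega>) * cprob M N Z V B \<omega>)"
    using p m unfolding g_split left_diff_distrib by (auto simp: gp_def gm_def)
  show "(\<integral>\<omega>. g (U \<omega>, Z \<omega>) * indicator B (V \<omega>) \<partial>M) = (\<integral>\<omega>. g (U \<omega>, Z \<omega>) * cprob M N Z V B \<omega> \<partial>M)"
    using p m unfolding g_split left_diff_distrib by (auto simp: gp_def gm_def)
qed

lemma integrable_cprob_mult:
  assumes "U \<in> measurable M P" "A \<in> sets P" "integrable M f"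
  shows "integrable M (\<lambda>\<omega>. cprob M N Z U A \<omega> * f \<omega>)"
proof (rule Bochner_Integration.integrable_bound[OF assms(3)])
  show "AE \<omega> in M. norm (cprob M N Z U A \<omega> * f \<omega>) \<le> norm (f \<omega>)"
    using AE_cprob_bounded[OF assms(1,2)] by eventually_elim (simp add: abs_mult mult_left_le_one_le)
qed (use assms(3) in measurable)

lemma cexp_cong:
  "AE \<omega> in M. f \<omega> = g \<omega> \<Longrightarrow> f \<in> borel_measurable M \<Longrightarrow> g \<in> borel_measurable M
    \<Longrightarrow> AE \<omega> in M. cexp M N Z f \<omega> = cexp M N Z g \<omega>"
  unfolding cexp_def by (rule cond.real_cond_exp_cong)

lemma cexp_affine:
  assumes "a \<in> borel_measurable (sigma_gen M N Z)" "b \<in> borel_measurable (sigma_gen M N Z)"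
    and [measurable]: "f \<in> borel_measurable M"
    and "integrable M (\<lambda>\<omega>. a \<omega> * f \<omega>)" "integrable M b"
  shows "AE \<omega> in M. cexp M N Z (\<lambda>\<omega>. a \<omega> * f \<omega> + b \<omega>) \<omega> = a \<omega> * cexp M N Z f \<omega> + b \<omega>"
proof -
  have "AE \<omega> in M. real_cond_exp M (sigma_gen M N Z) (\<lambda>\<omega>. a \<omega> * f \<omega> + b \<omega>) \<omega>
      = real_cond_exp M (sigma_gen M N Z) (\<lambda>\<omega>. a \<omega> * f \<omega>) \<omega> + real_cond_exp M (sigma_gen M N Z) b \<omega>"
    using assms(4,5) by (rule cond.real_cond_exp_add)
  moreover have "AE \<omega> in M. real_cond_exp M (sigma_gen M N Z) (\<lambda>\<omega>. a \<omega> * f \<omega>) \<omega>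
      = a \<omega> * real_cond_exp M (sigma_gen M N Z) f \<omega>"
    using assms(1,3,4) by (rule cond.real_cond_exp_mult)
  moreover have "AE \<omega> in M. real_cond_exp M (sigma_gen M N Z) b \<omega> = b \<omega>"
    using assms(5,2) by (rule cond.real_cond_exp_F_meas)
  ultimately show ?thesis unfolding cexp_def by eventually_elim simp
qed

lemma cond_indep_comp:
  assumes [measurable]: "U \<in> measurable M P" "V \<in> measurable M Q" "f \<in> measurable P P'"
    and indep: "cond_indep M N Z P U Q V"
  shows "cond_indep M N Z P' (\<lambda>\<omega>. f (U \<omega>)) Q V"
  unfolding cond_indep_def
proof (intro ballI)
  fix A B assume [measurable]: "A \<in> sets P'" "B \<in> sets Q"
  define A' where "A' = f -` A \<inter> space P"
  have [measurable]: "A' \<in> sets P" unfolding A'_def by measurable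
  have A': "indicator A (f (U \<omega>)) = (indicator A' (U \<omega>) :: real)" if "\<omega> \<in> space M" for \<omega>
    using measurable_space[OF assms(1) that] by (simp add: A'_def indicator_def)
  have "AE \<omega> in M. cexp M N Z (\<lambda>\<omega>. indicator A (f (U \<omega>)) * indicator B (V \<omega>)) \<omega>
      = cexp M N Z (\<lambda>\<omega>. indicator A' (U \<omega>) * indicator B (V \<omega>)) \<omega>"
    by (intro cexp_cong AE_I2) (auto simp: A')
  moreover have "AE \<omega> in M. cprob M N Z (\<lambda>\<omega>. f (U \<omega>)) A \<omega> = cprob M N Z U A' \<omega>"
    unfolding cprob_def by (intro cexp_cong AE_I2) (auto simp: A')
  moreover have "AE \<omega> in M. cexp M N Z (\<lambda>\<omega>. indicator A' (U \<omega>) * indicator B (V \<omega>)) \<omega>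
      = cprob M N Z U A' \<omega> * cprob M N Z V B \<omega>"
    using indep \<open>A' \<in> sets P\<close> \<open>B \<in> sets Q\<close> unfolding cond_indep_def by blast
  ultimately show "AE \<omega> in M. cexp M N Z (\<lambda>\<omega>. indicator A (f (U \<omega>)) * indicator B (V \<omega>)) \<omega>
      = cprob M N Z (\<lambda>\<omega>. f (U \<omega>)) A \<omega> * cprob M N Z V B \<omega>"
    by eventually_elim simp
qed

lemma cexp_eqI:
  assumes "integrable M f" "integrable M h" "h \<in> borel_measurable (sigma_gen M N Z)"
    and eq: "\<And>C. C \<in> sets N \<Longrightarrow> (\<integral>\<omega>. indicator C (Z \<omega>) * f \<omega> \<partial>M) = (\<integral>\<omega>. indicator C (Z \<omega>) * h \<omega> \<partial>M)"
  shows "AE \<omega> in M. cexp M N Z f \<omega> = h \<omega>"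
  unfolding cexp_def
proof (rule cond.real_cond_exp_charact[OF _ assms(1-3)])
  fix A assume "A \<in> sets (sigma_gen M N Z)"
  then obtain C where C: "C \<in> sets N" "A = Z -` C \<inter> space M" using sets_sigma_gen by blast
  have "indicator A \<omega> = (indicator C (Z \<omega>) :: real)" if "\<omega> \<in> space M" for \<omega>
    using that C(2) by (simp add: indicator_def)
  then show "(\<integral>\<omega>\<in>A. f \<omega> \<partial>M) = (\<integral>\<omega>\<in>A. h \<omega> \<partial>M)"
    unfolding set_lebesgue_integral_def using eq[OF C(1)]
    by (simp cong: Bochner_Integration.integral_cong)
qed

lemma
  assumes [measurable]: "X \<in> borel_measurable M" and binary: "\<forall>\<omega>\<in>space M. X \<omega> \<in> {0, 1}"
  shows cexp_binary: "AE \<omega> in M. cexp M N Z X \<omega> = cprob M N Z X {1} \<omega>"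
    and cprob_binary_0: "AE \<omega> in M. cprob M N Z X {0} \<omega> = 1 - cprob M N Z X {1} \<omega>"
proof -
  show "AE \<omega> in M. cexp M N Z X \<omega> = cprob M N Z X {1} \<omega>"
    unfolding cprob_def by (intro cexp_cong AE_I2) (use binary in \<open>auto simp: indicator_def\<close>)
  have ind1: "integrable M (\<lambda>\<omega>. indicator {1} (X \<omega>) :: real)"
    by (intro integrable_const_bound[where B=1]) auto
  have "AE \<omega> in M. cprob M N Z X {0} \<omega> = cexp M N Z (\<lambda>\<omega>. 1 - indicator {1} (X \<omega>)) \<omega>"
    unfolding cprob_def by (intro cexp_cong AE_I2) (use binary in \<open>auto simp: indicator_def\<close>)
  moreover have "AE \<omega> in M. cexp M N Z (\<lambda>\<omega>. 1 - indicator {1} (X \<omega>)) \<omega>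
      = cexp M N Z (\<lambda>_. 1) \<omega> - cprob M N Z X {1} \<omega>"
    unfolding cprob_def cexp_def using ind1 by (intro cond.real_cond_exp_diff) auto
  moreover have "AE \<omega> in M. cexp M N Z (\<lambda>_. 1) \<omega> = 1"
    unfolding cexp_def by (intro cond.real_cond_exp_F_meas) auto
  ultimately show "AE \<omega> in M. cprob M N Z X {0} \<omega> = 1 - cprob M N Z X {1} \<omega>"
    by eventually_elim simp
qed

lemma cvar_binary:
  assumes [measurable]: "X \<in> borel_measurable M" and binary: "\<forall>\<omega>\<in>space M. X \<omega> \<in> {0, 1}"
  shows "AE \<omega> in M. cvar M N Z X \<omega> = cprob M N Z X {1} \<omega> * (1 - cprob M N Z X {1} \<omega>)"
proof -
  let ?p = "cprob M N Z X {1}"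
  have p_int: "integrable M ?p" by (rule integrable_cprob[of X borel]) auto
  have p01: "AE \<omega> in M. 0 \<le> ?p \<omega> \<and> ?p \<omega> \<le> 1" by (rule AE_cprob_bounded[of X borel]) auto
  have p_sq_int: "integrable M (\<lambda>\<omega>. (?p \<omega>)\<^sup>2)"
  proof (rule Bochner_Integration.integrable_bound[where f="\<lambda>_. 1::real"])
    show "AE \<omega> in M. norm ((?p \<omega>)\<^sup>2) \<le> norm (1::real)"
      using p01 by eventually_elim (simp add: power_le_one)
  qed auto
  have lin_int: "integrable M (\<lambda>\<omega>. (1 - 2 * ?p \<omega>) * X \<omega>)"
  proof (rule Bochner_Integration.integrable_bound[where f="\<lambda>\<omega>. 1 + 2 * \<bar>?p \<omega>\<bar>"])
    show "integrable M (\<lambda>\<omega>. 1 + 2 * \<bar>?p \<omega>\<bar>)" using p_int by auto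
    show "AE \<omega> in M. norm ((1 - 2 * ?p \<omega>) * X \<omega>) \<le> norm (1 + 2 * \<bar>?p \<omega>\<bar>)"
      using binary by (intro AE_I2) auto
  qed auto
  have "AE \<omega> in M. cexp M N Z (\<lambda>\<omega>. (X \<omega> - cexp M N Z X \<omega>)\<^sup>2) \<omega>
      = cexp M N Z (\<lambda>\<omega>. (1 - 2 * ?p \<omega>) * X \<omega> + (?p \<omega>)\<^sup>2) \<omega>"
  proof (rule cexp_cong)
    show "AE \<omega> in M. (X \<omega> - cexp M N Z X \<omega>)\<^sup>2 = (1 - 2 * ?p \<omega>) * X \<omega> + (?p \<omega>)\<^sup>2"
      using cexp_binary[OF assms] AE_space
    proof eventually_elim
      case (elim \<omega>)
      then have "X \<omega> = 0 \<or> X \<omega> = 1" using binary by auto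
      then show ?case using elim by (auto simp: power2_eq_square algebra_simps)
    qed
  qed auto
  moreover have "AE \<omega> in M. cexp M N Z (\<lambda>\<omega>. (1 - 2 * ?p \<omega>) * X \<omega> + (?p \<omega>)\<^sup>2) \<omega>
      = (1 - 2 * ?p \<omega>) * cexp M N Z X \<omega> + (?p \<omega>)\<^sup>2"
    by (rule cexp_affine[OF _ _ _ lin_int p_sq_int]) auto
  ultimately show ?thesis
    using cexp_binary[OF assms]
    by eventually_elim (simp add: cvar_def power2_eq_square algebra_simps)
qed


end

section \<open>The regression function and potential outcomes\<close>

lemma
  assumes "is_regression M N Y X Z f0"
  shows measurable_regression_slice: "(\<lambda>z. f0 x z) \<in> borel_measurable N"
    and measurable_regression:
      "a \<in> borel_measurable M' \<Longrightarrow> Z' \<in> measurable M' N \<Longrightarrow> (\<lambda>\<omega>. f0 (a \<omega>) (Z' \<omega>)) \<in> borel_measurable M'"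
proof -
  have f0: "(\<lambda>(x, z). f0 x z) \<in> borel_measurable (borel \<Otimes>\<^sub>M N)"
    using assms unfolding is_regression_def by auto
  show "(\<lambda>z. f0 x z) \<in> borel_measurable N"
    using measurable_Pair2[OF f0] by simp
  show "(\<lambda>\<omega>. f0 (a \<omega>) (Z' \<omega>)) \<in> borel_measurable M'"
    if "a \<in> borel_measurable M'" "Z' \<in> measurable M' N"
    using measurable_compose[OF measurable_Pair[OF that] f0] by simp
qed

context prob_space
begin

lemma
  assumes reg: "is_regression M N Y X Z f0"
    and [measurable]: "X \<in> borel_measurable M" "Z \<in> measurable M N" "Y \<in> borel_measurable M"
    and w: "w \<in> borel_measurable (sigma_gen M (borel \<Otimes>\<^sub>M N) (\<lambda>\<omega>. (X \<omega>, Z \<omega>)))"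
    and int: "integrable M (\<lambda>\<omega>. w \<omega> * Y \<omega>)"
  shows integrable_mult_regression: "integrable M (\<lambda>\<omega>. w \<omega> * f0 (X \<omega>) (Z \<omega>))"
    and integral_mult_regression: "(\<integral>\<omega>. w \<omega> * f0 (X \<omega>) (Z \<omega>) \<partial>M) = (\<integral>\<omega>. w \<omega> * Y \<omega> \<partial>M)"
proof -
  interpret XZ: cond_given M "borel \<Otimes>\<^sub>M N" "\<lambda>\<omega>. (X \<omega>, Z \<omega>)"
    by unfold_locales measurable
  let ?E = "cexp M (borel \<Otimes>\<^sub>M N) (\<lambda>\<omega>. (X \<omega>, Z \<omega>)) Y"
  have ae: "AE \<omega> in M. w \<omega> * ?E \<omega> = w \<omega> * f0 (X \<omega>) (Z \<omega>)"
    using reg unfolding is_regression_def by (auto elim!: eventually_mono)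
  have [measurable]: "w \<in> borel_measurable M"
    using measurable_from_subalg[OF XZ.cond.subalg w] .
  have "(\<lambda>\<omega>. w \<omega> * f0 (X \<omega>) (Z \<omega>)) \<in> borel_measurable M"
    using measurable_regression[OF reg] by measurable
  then show "integrable M (\<lambda>\<omega>. w \<omega> * f0 (X \<omega>) (Z \<omega>))"
    and "(\<integral>\<omega>. w \<omega> * f0 (X \<omega>) (Z \<omega>) \<partial>M) = (\<integral>\<omega>. w \<omega> * Y \<omega> \<partial>M)"
    using XZ.integrable_mult_cexp[OF w _ int] XZ.integral_mult_cexp[OF w _ int] ae
      integral_cong_AE[of "\<lambda>\<omega>. w \<omega> * ?E \<omega>" M "\<lambda>\<omega>. w \<omega> * f0 (X \<omega>) (Z \<omega>)"]
    by (auto intro: integrable_cong_AE_imp)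
qed

lemma integrable_square_regression:
  assumes reg: "is_regression M N Y X Z f0"
    and [measurable]: "X \<in> borel_measurable M" "Z \<in> measurable M N" "Y \<in> borel_measurable M"
    and "integrable M (\<lambda>\<omega>. (Y \<omega>)\<^sup>2)"
  shows "integrable M (\<lambda>\<omega>. (f0 (X \<omega>) (Z \<omega>))\<^sup>2)"
proof -
  interpret XZ: cond_given M "borel \<Otimes>\<^sub>M N" "\<lambda>\<omega>. (X \<omega>, Z \<omega>)"
    by unfold_locales measurable
  have "integrable M (\<lambda>\<omega>. (cexp M (borel \<Otimes>\<^sub>M N) (\<lambda>\<omega>. (X \<omega>, Z \<omega>)) Y \<omega>)\<^sup>2)"
    unfolding cexp_def using assms(4,5) by (rule integrable_square_cond_exp[OF XZ.cond.sigma_finite_subalgebra_axioms])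
  then show ?thesis
  proof (rule integrable_cong_AE_imp)
    show "(\<lambda>\<omega>. (f0 (X \<omega>) (Z \<omega>))\<^sup>2) \<in> borel_measurable M"
      using measurable_regression[OF reg] by measurable
    show "AE \<omega> in M. (cexp M (borel \<Otimes>\<^sub>M N) (\<lambda>\<omega>. (X \<omega>, Z \<omega>)) Y \<omega>)\<^sup>2 = (f0 (X \<omega>) (Z \<omega>))\<^sup>2"
      using reg unfolding is_regression_def by (auto elim!: eventually_mono)
  qed
qed

end

context cond_given
begin

lemma integral_cprob_mult_cexp_cond_indep:
  fixes X V :: "'a \<Rightarrow> real"
  assumes [measurable]: "X \<in> borel_measurable M" "V \<in> borel_measurable M" "C \<in> sets N"
    and V_int: "integrable M V"
    and indep: "cond_indep M N Z borel V borel X"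
  shows "(\<integral>\<omega>. indicator C (Z \<omega>) * (cprob M N Z X {a} \<omega> * cexp M N Z V \<omega>) \<partial>M)
       = (\<integral>\<omega>. indicator C (Z \<omega>) * indicator {a} (X \<omega>) * V \<omega> \<partial>M)"
proof -
  let ?p = "cprob M N Z X {a}"
  have CV_int: "integrable M (\<lambda>\<omega>. indicator C (Z \<omega>) * V \<omega>)"
    by (rule Bochner_Integration.integrable_bound[OF V_int]) (auto simp: indicator_def)
  have g: "(\<lambda>u. fst u * indicator C (snd u) :: real) \<in> borel_measurable (borel \<Otimes>\<^sub>M N)" by measurable
  have "(\<integral>\<omega>. indicator C (Z \<omega>) * (?p \<omega> * cexp M N Z V \<omega>) \<partial>M)
      = (\<integral>\<omega>. (indicator C (Z \<omega>) * ?p \<omega>) * cexp M N Z V \<omega> \<partial>M)"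
    by (simp add: ac_simps)
  also have "\<dots> = (\<integral>\<omega>. (V \<omega> * indicator C (Z \<omega>)) * ?p \<omega> \<partial>M)"
    using integrable_cprob_mult[of X borel "{a}", OF _ _ CV_int]
    by (subst integral_mult_cexp) (auto simp: ac_simps)
  also have "\<dots> = (\<integral>\<omega>. (V \<omega> * indicator C (Z \<omega>)) * indicator {a} (X \<omega>) \<partial>M)"
  proof -
    have "integrable M (\<lambda>\<omega>. (V \<omega> * indicator C (Z \<omega>)) * indicator {a} (X \<omega>))"
      by (rule Bochner_Integration.integrable_bound[OF V_int]) (auto simp: indicator_def)
    then show ?thesis using integral_cond_indep[OF _ _ _ g indep, of "{a}"] by simp
  qed
  finally show ?thesis by (simp add: ac_simps)
qed

lemma
  fixes X Y :: "'a \<Rightarrow> real"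
  assumes reg: "is_regression M N Y X Z f0"
    and [measurable]: "X \<in> borel_measurable M" "Y \<in> borel_measurable M"
    and Y_int: "integrable M Y"
  shows integrable_cprob_mult_regression: "integrable M (\<lambda>\<omega>. cprob M N Z X {a} \<omega> * f0 a (Z \<omega>))"
    and integral_indicator_mult_regression: "C \<in> sets N \<Longrightarrow>
      (\<integral>\<omega>. indicator C (Z \<omega>) * indicator {a} (X \<omega>) * Y \<omega> \<partial>M)
       = (\<integral>\<omega>. indicator C (Z \<omega>) * (cprob M N Z X {a} \<omega> * f0 a (Z \<omega>)) \<partial>M)"
proof -
  let ?p = "cprob M N Z X {a}"
  have f0a_F [measurable]: "(\<lambda>\<omega>. f0 a (Z \<omega>)) \<in> borel_measurable (sigma_gen M N Z)"
    by (rule measurable_comp_Z_sigma_gen[OF measurable_regression_slice[OF reg]])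
  have [measurable]: "(\<lambda>\<omega>. f0 (X \<omega>) (Z \<omega>)) \<in> borel_measurable M"
    "(\<lambda>\<omega>. f0 a (Z \<omega>)) \<in> borel_measurable M"
    using measurable_from_subalg[OF cond.subalg f0a_F] by (auto intro: measurable_regression[OF reg])
  have "integrable M (\<lambda>\<omega>. 1 * f0 (X \<omega>) (Z \<omega>))"
    by (rule integrable_mult_regression[OF reg assms(2) measurable_Z assms(3)]) (simp_all add: Y_int)
  then have f0a_int: "integrable M (\<lambda>\<omega>. f0 a (Z \<omega>) * indicator {a} (X \<omega>))"
  proof (rule Bochner_Integration.integrable_bound[OF _ _ AE_I2])
    show "norm (f0 a (Z \<omega>) * indicator {a} (X \<omega>)) \<le> norm (1 * f0 (X \<omega>) (Z \<omega>))" for \<omega>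
      by (cases "X \<omega> = a") auto
  qed measurable
  have "integrable M (\<lambda>\<omega>. f0 a (Z \<omega>) * cexp M N Z (\<lambda>\<omega>. indicator {a} (X \<omega>)) \<omega>)"
    by (rule integrable_mult_cexp[OF f0a_F _ f0a_int]) measurable
  then show "integrable M (\<lambda>\<omega>. ?p \<omega> * f0 a (Z \<omega>))"
    by (simp add: cprob_def mult.commute)
  assume [measurable]: "C \<in> sets N"
  have w: "(\<lambda>\<omega>. indicator C (Z \<omega>) * indicator {a} (X \<omega>) :: real)
      \<in> borel_measurable (sigma_gen M (borel \<Otimes>\<^sub>M N) (\<lambda>\<omega>. (X \<omega>, Z \<omega>)))"
  proof -
    note [measurable] = measurable_fst_sigma_gen[OF \<open>X \<in> borel_measurable M\<close> measurable_Z]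
      measurable_snd_sigma_gen[OF \<open>X \<in> borel_measurable M\<close> measurable_Z]
    show ?thesis by measurable
  qed
  have CY_int: "integrable M (\<lambda>\<omega>. indicator C (Z \<omega>) * indicator {a} (X \<omega>) * Y \<omega>)"
    by (rule Bochner_Integration.integrable_bound[OF Y_int]) (auto simp: indicator_def)
  have "(\<integral>\<omega>. indicator C (Z \<omega>) * indicator {a} (X \<omega>) * Y \<omega> \<partial>M)
      = (\<integral>\<omega>. indicator C (Z \<omega>) * indicator {a} (X \<omega>) * f0 (X \<omega>) (Z \<omega>) \<partial>M)"
    by (rule integral_mult_regression[OF reg assms(2) measurable_Z assms(3) w CY_int, symmetric])
  also have "\<dots> = (\<integral>\<omega>. (indicator C (Z \<omega>) * f0 a (Z \<omega>)) * indicator {a} (X \<omega>) \<partial>M)"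
    by (intro Bochner_Integration.integral_cong) (auto simp: indicator_def)
  also have "\<dots> = (\<integral>\<omega>. (indicator C (Z \<omega>) * f0 a (Z \<omega>)) * ?p \<omega> \<partial>M)"
    unfolding cprob_def
    by (intro integral_mult_cexp[symmetric] Bochner_Integration.integrable_bound[OF f0a_int])
      (auto simp: indicator_def)
  finally show "(\<integral>\<omega>. indicator C (Z \<omega>) * indicator {a} (X \<omega>) * Y \<omega> \<partial>M)
      = (\<integral>\<omega>. indicator C (Z \<omega>) * (?p \<omega> * f0 a (Z \<omega>)) \<partial>M)"
    by (simp add: ac_simps)
qed

lemma regression_eq_cexp_potential_outcome:
  fixes X Y Ya :: "'a \<Rightarrow> real"
  assumes reg: "is_regression M N Y X Z f0"
    and [measurable]: "X \<in> borel_measurable M" "Y \<in> borel_measurable M" "Ya \<in> borel_measurable M"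
    and Y_int: "integrable M Y" and Ya_int: "integrable M Ya"
    and consistent: "AE \<omega> in M. X \<omega> = a \<longrightarrow> Y \<omega> = Ya \<omega>"
    and indep: "cond_indep M N Z borel Ya borel X"
    and pos: "AE \<omega> in M. 0 < cprob M N Z X {a} \<omega>"
  shows "AE \<omega> in M. f0 a (Z \<omega>) = cexp M N Z Ya \<omega>"
proof -
  let ?p = "cprob M N Z X {a}" and ?\<mu> = "cexp M N Z Ya"
  have p\<mu>_int: "integrable M (\<lambda>\<omega>. ?p \<omega> * ?\<mu> \<omega>)"
    unfolding cexp_def using Ya_int
    by (intro integrable_cprob_mult[of X borel] cond.real_cond_exp_int) auto
  \<comment> \<open>Both sides of the claim, multiplied by P(X = a | Z), have the same integrals over the
      events in the sigma algebra of Z; positivity then cancels the factor.\<close>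
  have "AE \<omega> in M. cexp M N Z (\<lambda>\<omega>. ?p \<omega> * ?\<mu> \<omega>) \<omega> = ?p \<omega> * f0 a (Z \<omega>)"
  proof (rule cexp_eqI[OF p\<mu>_int integrable_cprob_mult_regression[OF reg _ _ Y_int]])
    fix C assume [measurable]: "C \<in> sets N"
    have "(\<integral>\<omega>. indicator C (Z \<omega>) * (?p \<omega> * ?\<mu> \<omega>) \<partial>M)
        = (\<integral>\<omega>. indicator C (Z \<omega>) * indicator {a} (X \<omega>) * Ya \<omega> \<partial>M)"
      by (rule integral_cprob_mult_cexp_cond_indep[OF _ _ _ Ya_int indep]) auto
    also have "\<dots> = (\<integral>\<omega>. indicator C (Z \<omega>) * indicator {a} (X \<omega>) * Y \<omega> \<partial>M)"
      using consistent by (intro integral_cong_AE) (auto elim!: eventually_mono simp: indicator_def)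
    also have "\<dots> = (\<integral>\<omega>. indicator C (Z \<omega>) * (?p \<omega> * f0 a (Z \<omega>)) \<partial>M)"
      by (rule integral_indicator_mult_regression[OF reg _ _ Y_int]) auto
    finally show "(\<integral>\<omega>. indicator C (Z \<omega>) * (?p \<omega> * ?\<mu> \<omega>) \<partial>M)
        = (\<integral>\<omega>. indicator C (Z \<omega>) * (?p \<omega> * f0 a (Z \<omega>)) \<partial>M)" .
  qed (use measurable_regression_slice[OF reg] in measurable)
  moreover have "AE \<omega> in M. cexp M N Z (\<lambda>\<omega>. ?p \<omega> * ?\<mu> \<omega>) \<omega> = ?p \<omega> * ?\<mu> \<omega>"
    using p\<mu>_int unfolding cexp_def[of M N Z "\<lambda>\<omega>. ?p \<omega> * ?\<mu> \<omega>"]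
    by (intro cond.real_cond_exp_F_meas) auto
  ultimately show ?thesis
    using pos by eventually_elim simp
qed

lemma regression_contrast_eq_cexp_effect:
  fixes X Y Y0 Y1 :: "'a \<Rightarrow> real"
  assumes reg: "is_regression M N Y X Z f0"
    and [measurable]: "X \<in> borel_measurable M" "Y \<in> borel_measurable M"
      "Y0 \<in> borel_measurable M" "Y1 \<in> borel_measurable M"
    and binary: "\<forall>\<omega>\<in>space M. X \<omega> \<in> {0, 1}"
    and Y_int: "integrable M Y" and Y0_int: "integrable M Y0" and Y1_int: "integrable M Y1"
    and consistency: "AE \<omega> in M. Y \<omega> = (if X \<omega> = 1 then Y1 \<omega> else Y0 \<omega>)"
    and ignorability: "cond_indep M N Z borel (\<lambda>\<omega>. (Y0 \<omega>, Y1 \<omega>)) borel X"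
    and positivity: "AE \<omega> in M. 0 < cprob M N Z X {1} \<omega> \<and> cprob M N Z X {1} \<omega> < 1"
  shows "AE \<omega> in M. f0 1 (Z \<omega>) - f0 0 (Z \<omega>) = cexp M N Z Y1 \<omega> - cexp M N Z Y0 \<omega>"
proof -
  have "AE \<omega> in M. f0 1 (Z \<omega>) = cexp M N Z Y1 \<omega>"
  proof (rule regression_eq_cexp_potential_outcome[OF reg _ _ _ Y_int Y1_int])
    show "AE \<omega> in M. X \<omega> = 1 \<longrightarrow> Y \<omega> = Y1 \<omega>"
      using consistency by eventually_elim simp
    show "cond_indep M N Z borel Y1 borel X"
      using cond_indep_comp[OF _ _ _ ignorability, of snd] by simp
    show "AE \<omega> in M. 0 < cprob M N Z X {1} \<omega>"
      using positivity by eventually_elim simp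
  qed simp_all
  moreover have "AE \<omega> in M. f0 0 (Z \<omega>) = cexp M N Z Y0 \<omega>"
  proof (rule regression_eq_cexp_potential_outcome[OF reg _ _ _ Y_int Y0_int])
    show "AE \<omega> in M. X \<omega> = 0 \<longrightarrow> Y \<omega> = Y0 \<omega>"
      using consistency by eventually_elim simp
    show "cond_indep M N Z borel Y0 borel X"
      using cond_indep_comp[OF _ _ _ ignorability, of fst] by simp
    show "AE \<omega> in M. 0 < cprob M N Z X {0} \<omega>"
      using cprob_binary_0[OF assms(2) binary] positivity by eventually_elim simp
  qed simp_all
  ultimately show ?thesis by eventually_elim simp
qed

section \<open>Excess risk of a conditional copy of the treatment\<close>

lemma integral_indicators_cond_indep:
  fixes X X' :: "'a \<Rightarrow> real"
  assumes [measurable]: "X \<in> borel_measurable M" "X' \<in> borel_measurable M" "h \<in> borel_measurable N"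
    and indep: "cond_indep M N Z borel X borel X'"
    and copy: "AE \<omega> in M. cprob M N Z X' {b} \<omega> = 1 - cprob M N Z X {a} \<omega>"
    and int: "integrable M (\<lambda>\<omega>. indicator {a} (X \<omega>) * h (Z \<omega>) * indicator {b} (X' \<omega>))"
  shows "(\<integral>\<omega>. indicator {a} (X \<omega>) * h (Z \<omega>) * indicator {b} (X' \<omega>) \<partial>M)
       = (\<integral>\<omega>. cprob M N Z X {a} \<omega> * (1 - cprob M N Z X {a} \<omega>) * h (Z \<omega>) \<partial>M)"
proof -
  let ?p = "cprob M N Z X {a}" and ?q = "cprob M N Z X' {b}"
  have g: "(\<lambda>u. indicator {a} (fst u) * h (snd u) :: real) \<in> borel_measurable (borel \<Otimes>\<^sub>M N)"
    by measurable
  note q = integrable_cond_indep[OF _ _ _ g indep] integral_cond_indep[OF _ _ _ g indep]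
  have ae: "AE \<omega> in M. indicator {a} (X \<omega>) * h (Z \<omega>) * ?q \<omega> = (h (Z \<omega>) * (1 - ?p \<omega>)) * indicator {a} (X \<omega>)"
    using copy by eventually_elim simp
  have "(\<integral>\<omega>. indicator {a} (X \<omega>) * h (Z \<omega>) * indicator {b} (X' \<omega>) \<partial>M)
      = (\<integral>\<omega>. indicator {a} (X \<omega>) * h (Z \<omega>) * ?q \<omega> \<partial>M)"
    using q(2)[of "{b}"] int by simp
  also have "\<dots> = (\<integral>\<omega>. (h (Z \<omega>) * (1 - ?p \<omega>)) * indicator {a} (X \<omega>) \<partial>M)"
    using ae by (intro integral_cong_AE) auto
  also have "\<dots> = (\<integral>\<omega>. (h (Z \<omega>) * (1 - ?p \<omega>)) * ?p \<omega> \<partial>M)"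
  proof -
    have "integrable M (\<lambda>\<omega>. indicator {a} (X \<omega>) * h (Z \<omega>) * ?q \<omega>)"
      using q(1)[of "{b}"] int by simp
    then have "integrable M (\<lambda>\<omega>. (h (Z \<omega>) * (1 - ?p \<omega>)) * indicator {a} (X \<omega>))"
      by (rule integrable_cong_AE_imp[OF _ _ ae]) measurable
    then show ?thesis unfolding cprob_def by (intro integral_mult_cexp[symmetric]) auto
  qed
  finally show ?thesis by (simp add: ac_simps)
qed

lemma integral_residual_indicators_eq_0:
  fixes X X' Y :: "'a \<Rightarrow> real"
  assumes reg: "is_regression M N Y X Z f0"
    and [measurable]: "X \<in> borel_measurable M" "X' \<in> borel_measurable M" "Y \<in> borel_measurable M"
      "h \<in> borel_measurable N"
    and Y_sq: "integrable M (\<lambda>\<omega>. (Y \<omega>)\<^sup>2)"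
    and indep: "cond_indep M N Z borel (\<lambda>\<omega>. (Y \<omega>, X \<omega>)) borel X'"
    and h_sq: "integrable M (\<lambda>\<omega>. (indicator {a} (X \<omega>) * h (Z \<omega>))\<^sup>2 * indicator {b} (X' \<omega>))"
    and int: "integrable M (\<lambda>\<omega>. (Y \<omega> - f0 (X \<omega>) (Z \<omega>)) * indicator {a} (X \<omega>) * h (Z \<omega>) * indicator {b} (X' \<omega>))"
  shows "(\<integral>\<omega>. (Y \<omega> - f0 (X \<omega>) (Z \<omega>)) * indicator {a} (X \<omega>) * h (Z \<omega>) * indicator {b} (X' \<omega>) \<partial>M) = 0"
proof -
  let ?q = "cprob M N Z X' {b}"
  define w where "w \<omega> = indicator {a} (X \<omega>) * h (Z \<omega>) * ?q \<omega>" for \<omega>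
  note [measurable] = measurable_regression[OF reg]
  have w_XZ: "w \<in> borel_measurable (sigma_gen M (borel \<Otimes>\<^sub>M N) (\<lambda>\<omega>. (X \<omega>, Z \<omega>)))"
  proof -
    note [measurable] = measurable_fst_sigma_gen[OF \<open>X \<in> borel_measurable M\<close> measurable_Z]
      measurable_snd_sigma_gen[OF \<open>X \<in> borel_measurable M\<close> measurable_Z]
      measurable_sigma_gen_Pair[OF \<open>X \<in> borel_measurable M\<close> measurable_Z measurable_cprob(1)]
    show ?thesis unfolding w_def by measurable
  qed
  have q01: "AE \<omega> in M. 0 \<le> ?q \<omega> \<and> ?q \<omega> \<le> 1" by (rule AE_cprob_bounded[of X' borel]) auto
  have hq_int: "integrable M (\<lambda>\<omega>. (indicator {a} (X \<omega>) * h (Z \<omega>))\<^sup>2 * ?q \<omega>)"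
    using integrable_cond_indep[OF _ _ _ _ indep, of "{b}" "\<lambda>u. (indicator {a} (snd (fst u)) * h (snd u))\<^sup>2"] h_sq
    by simp
  have "integrable M (\<lambda>\<omega>. (indicator {a} (X \<omega>) * h (Z \<omega>)) * ?q \<omega> * Y \<omega>)"
    by (rule integrable_weight_mult[where g="\<lambda>\<omega>. indicator {a} (X \<omega>) * h (Z \<omega>)", OF _ _ _ q01 hq_int Y_sq];
        measurable)
  then have wY_int: "integrable M (\<lambda>\<omega>. w \<omega> * Y \<omega>)" by (simp add: w_def)
  have "(\<integral>\<omega>. (Y \<omega> - f0 (X \<omega>) (Z \<omega>)) * indicator {a} (X \<omega>) * h (Z \<omega>) * indicator {b} (X' \<omega>) \<partial>M)
      = (\<integral>\<omega>. (Y \<omega> - f0 (X \<omega>) (Z \<omega>)) * indicator {a} (X \<omega>) * h (Z \<omega>) * ?q \<omega> \<partial>M)"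
    using integral_cond_indep[OF _ _ _ _ indep, of "{b}" "\<lambda>u. (fst (fst u) - f0 (snd (fst u)) (snd u)) * indicator {a} (snd (fst u)) * h (snd u)"] int
    by simp
  also have "\<dots> = (\<integral>\<omega>. w \<omega> * Y \<omega> - w \<omega> * f0 (X \<omega>) (Z \<omega>) \<partial>M)"
    by (simp add: w_def algebra_simps)
  also have "\<dots> = 0"
    using integrable_mult_regression[OF reg _ _ _ w_XZ wY_int] integral_mult_regression[OF reg _ _ _ w_XZ wY_int] wY_int
    by simp
  finally show ?thesis .
qed

lemma integral_square_diff_cond_copy:
  fixes X X' :: "'a \<Rightarrow> real" and g :: "real \<Rightarrow> 'z \<Rightarrow> real"
  assumes [measurable]: "X \<in> borel_measurable M" "X' \<in> borel_measurable M"
      "(\<lambda>z. g 0 z) \<in> borel_measurable N" "(\<lambda>z. g 1 z) \<in> borel_measurable N"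
    and binary: "\<forall>\<omega>\<in>space M. X \<omega> \<in> {0, 1}" and binary': "\<forall>\<omega>\<in>space M. X' \<omega> \<in> {0, 1}"
    and same: "cond_same_dist M N Z borel X' X"
    and indep: "cond_indep M N Z borel X borel X'"
    and sq_int: "integrable M (\<lambda>\<omega>. (g (X \<omega>) (Z \<omega>) - g (X' \<omega>) (Z \<omega>))\<^sup>2)"
  shows "(\<integral>\<omega>. (g (X \<omega>) (Z \<omega>) - g (X' \<omega>) (Z \<omega>))\<^sup>2 \<partial>M)
       = 2 * (\<integral>\<omega>. cprob M N Z X {1} \<omega> * (1 - cprob M N Z X {1} \<omega>) * (g 1 (Z \<omega>) - g 0 (Z \<omega>))\<^sup>2 \<partial>M)"
proof -
  let ?p = "cprob M N Z X {1}"
  define H where "H z = (g 1 z - g 0 z)\<^sup>2" for z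
  have [measurable]: "H \<in> borel_measurable N" unfolding H_def by measurable
  have split: "(g (X \<omega>) (Z \<omega>) - g (X' \<omega>) (Z \<omega>))\<^sup>2
      = indicator {1} (X \<omega>) * H (Z \<omega>) * indicator {0} (X' \<omega>) + indicator {0} (X \<omega>) * H (Z \<omega>) * indicator {1} (X' \<omega>)"
    if "\<omega> \<in> space M" for \<omega>
    using square_diff_binary_indicators[of "X \<omega>" "X' \<omega>" g "Z \<omega>"] binary binary' that
    unfolding H_def by auto
  have cell_int: "integrable M (\<lambda>\<omega>. indicator {a} (X \<omega>) * H (Z \<omega>) * indicator {b} (X' \<omega>))"
    if "(a, b) \<in> {(1, 0), (0, 1)}" for a b
    using that split by (intro Bochner_Integration.integrable_bound[OF sq_int] AE_I2)
      (auto simp: indicator_def H_def)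
  have p0: "AE \<omega> in M. cprob M N Z X {0} \<omega> = 1 - ?p \<omega>"
    using binary by (intro cprob_binary_0) auto
  have same0: "AE \<omega> in M. cprob M N Z X' {0} \<omega> = cprob M N Z X {0} \<omega>"
    and same1: "AE \<omega> in M. cprob M N Z X' {1} \<omega> = ?p \<omega>"
    using same unfolding cond_same_dist_def by auto
  have "(\<integral>\<omega>. indicator {1} (X \<omega>) * H (Z \<omega>) * indicator {0} (X' \<omega>) \<partial>M)
      = (\<integral>\<omega>. ?p \<omega> * (1 - ?p \<omega>) * H (Z \<omega>) \<partial>M)"
    using p0 same0 by (intro integral_indicators_cond_indep[OF _ _ _ indep _ cell_int]) (auto elim: AE_mp)
  moreover have "(\<integral>\<omega>. indicator {0} (X \<omega>) * H (Z \<omega>) * indicator {1} (X' \<omega>) \<partial>M)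
      = (\<integral>\<omega>. ?p \<omega> * (1 - ?p \<omega>) * H (Z \<omega>) \<partial>M)"
  proof -
    have "(\<integral>\<omega>. indicator {0} (X \<omega>) * H (Z \<omega>) * indicator {1} (X' \<omega>) \<partial>M)
        = (\<integral>\<omega>. cprob M N Z X {0} \<omega> * (1 - cprob M N Z X {0} \<omega>) * H (Z \<omega>) \<partial>M)"
      using p0 same1 by (intro integral_indicators_cond_indep[OF _ _ _ indep _ cell_int]) (auto elim: AE_mp)
    also have "\<dots> = (\<integral>\<omega>. ?p \<omega> * (1 - ?p \<omega>) * H (Z \<omega>) \<partial>M)"
      using p0 by (intro integral_cong_AE) (auto elim!: eventually_mono)
    finally show ?thesis .
  qed
  ultimately show ?thesis
    using cell_int[of 1 0] cell_int[of 0 1]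
    by (simp add: split H_def cong: Bochner_Integration.integral_cong)
qed

lemma integral_residual_mult_diff_eq_0:
  fixes X X' Y :: "'a \<Rightarrow> real"
  assumes reg: "is_regression M N Y X Z f0"
    and [measurable]: "X \<in> borel_measurable M" "X' \<in> borel_measurable M" "Y \<in> borel_measurable M"
    and binary: "\<forall>\<omega>\<in>space M. X \<omega> \<in> {0, 1}" and binary': "\<forall>\<omega>\<in>space M. X' \<omega> \<in> {0, 1}"
    and Y_sq: "integrable M (\<lambda>\<omega>. (Y \<omega>)\<^sup>2)"
    and indep: "cond_indep M N Z borel (\<lambda>\<omega>. (Y \<omega>, X \<omega>)) borel X'"
    and sq_int: "integrable M (\<lambda>\<omega>. (f0 (X \<omega>) (Z \<omega>) - f0 (X' \<omega>) (Z \<omega>))\<^sup>2)"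
  shows "(\<integral>\<omega>. (Y \<omega> - f0 (X \<omega>) (Z \<omega>)) * (f0 (X \<omega>) (Z \<omega>) - f0 (X' \<omega>) (Z \<omega>)) \<partial>M) = 0"
proof -
  define R where "R \<omega> = Y \<omega> - f0 (X \<omega>) (Z \<omega>)" for \<omega>
  define k where "k \<omega> = f0 (X \<omega>) (Z \<omega>) - f0 (X' \<omega>) (Z \<omega>)" for \<omega>
  define D where "D z = f0 1 z - f0 0 z" for z
  note [measurable] = measurable_regression[OF reg] measurable_regression_slice[OF reg]
  have [measurable]: "R \<in> borel_measurable M" "k \<in> borel_measurable M" "D \<in> borel_measurable N"
    unfolding R_def k_def D_def by measurable
  have "integrable M (\<lambda>\<omega>. (R \<omega>)\<^sup>2)"
    unfolding R_def using Y_sq integrable_square_regression[OF reg _ _ _ Y_sq]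
    by (intro integrable_square_diff) auto
  then have Rk_int: "integrable M (\<lambda>\<omega>. R \<omega> * k \<omega>)"
    using sq_int unfolding k_def[symmetric] by (intro integrable_mult_of_square_integrable) auto
  have k_eq: "k \<omega> = indicator {1} (X \<omega>) * D (Z \<omega>) * indicator {0} (X' \<omega>)
      - indicator {0} (X \<omega>) * D (Z \<omega>) * indicator {1} (X' \<omega>)" if "\<omega> \<in> space M" for \<omega>
    using diff_binary_indicators[of "X \<omega>" "X' \<omega>" f0 "Z \<omega>"] binary binary' that
    unfolding k_def D_def by auto
  have term_eq_0: "(\<integral>\<omega>. R \<omega> * indicator {a} (X \<omega>) * D (Z \<omega>) * indicator {b} (X' \<omega>) \<partial>M) = 0"
    and term_int: "integrable M (\<lambda>\<omega>. R \<omega> * indicator {a} (X \<omega>) * D (Z \<omega>) * indicator {b} (X' \<omega>))"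
    if "(a, b) \<in> {(1, 0), (0, 1)}" for a b
  proof -
    show int: "integrable M (\<lambda>\<omega>. R \<omega> * indicator {a} (X \<omega>) * D (Z \<omega>) * indicator {b} (X' \<omega>))"
      using that k_eq by (intro Bochner_Integration.integrable_bound[OF Rk_int] AE_I2)
        (auto simp: indicator_def abs_mult)
    have "integrable M (\<lambda>\<omega>. (indicator {a} (X \<omega>) * D (Z \<omega>))\<^sup>2 * indicator {b} (X' \<omega>))"
      using that k_eq by (intro Bochner_Integration.integrable_bound[OF sq_int] AE_I2)
        (auto simp: indicator_def k_def[symmetric])
    then show "(\<integral>\<omega>. R \<omega> * indicator {a} (X \<omega>) * D (Z \<omega>) * indicator {b} (X' \<omega>) \<partial>M) = 0"
      using int unfolding R_def by (intro integral_residual_indicators_eq_0[OF reg _ _ _ _ Y_sq indep]) auto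
  qed
  have "(\<integral>\<omega>. R \<omega> * k \<omega> \<partial>M)
      = (\<integral>\<omega>. R \<omega> * indicator {1} (X \<omega>) * D (Z \<omega>) * indicator {0} (X' \<omega>)
          - R \<omega> * indicator {0} (X \<omega>) * D (Z \<omega>) * indicator {1} (X' \<omega>) \<partial>M)"
    by (intro Bochner_Integration.integral_cong) (auto simp: k_eq algebra_simps)
  also have "\<dots> = 0"
    using term_eq_0[of 1 0] term_eq_0[of 0 1] term_int[of 1 0] term_int[of 0 1] by simp
  finally show ?thesis unfolding R_def k_def .
qed

lemma integral_excess_risk_cond_copy:
  fixes X X' Y :: "'a \<Rightarrow> real"
  assumes reg: "is_regression M N Y X Z f0"
    and [measurable]: "X \<in> borel_measurable M" "X' \<in> borel_measurable M" "Y \<in> borel_measurable M"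
    and binary: "\<forall>\<omega>\<in>space M. X \<omega> \<in> {0, 1}" and binary': "\<forall>\<omega>\<in>space M. X' \<omega> \<in> {0, 1}"
    and Y_sq: "integrable M (\<lambda>\<omega>. (Y \<omega>)\<^sup>2)"
    and same: "cond_same_dist M N Z borel X' X"
    and indep: "cond_indep M N Z borel X' borel (\<lambda>\<omega>. (Y \<omega>, X \<omega>))"
    and err_int: "integrable M (\<lambda>\<omega>. (Y \<omega> - f0 (X' \<omega>) (Z \<omega>))\<^sup>2)"
  shows "(\<integral>\<omega>. (Y \<omega> - f0 (X' \<omega>) (Z \<omega>))\<^sup>2 \<partial>M) - (\<integral>\<omega>. (Y \<omega> - f0 (X \<omega>) (Z \<omega>))\<^sup>2 \<partial>M)
       = 2 * (\<integral>\<omega>. cprob M N Z X {1} \<omega> * (1 - cprob M N Z X {1} \<omega>) * (f0 1 (Z \<omega>) - f0 0 (Z \<omega>))\<^sup>2 \<partial>M)"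
proof -
  note [measurable] = measurable_regression[OF reg] measurable_regression_slice[OF reg]
  have indep_YX: "cond_indep M N Z borel (\<lambda>\<omega>. (Y \<omega>, X \<omega>)) borel X'"
    using indep by (rule cond_indep_sym)
  have indep_X: "cond_indep M N Z borel X borel X'"
    using cond_indep_comp[OF _ _ _ indep_YX, of snd] by simp
  have fX_sq: "integrable M (\<lambda>\<omega>. (f0 (X \<omega>) (Z \<omega>))\<^sup>2)"
    by (rule integrable_square_regression[OF reg _ _ _ Y_sq]) auto
  have R_sq: "integrable M (\<lambda>\<omega>. (Y \<omega> - f0 (X \<omega>) (Z \<omega>))\<^sup>2)"
    using Y_sq fX_sq by (intro integrable_square_diff) auto
  have "integrable M (\<lambda>\<omega>. (Y \<omega> - (Y \<omega> - f0 (X' \<omega>) (Z \<omega>)))\<^sup>2)"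
    by (rule integrable_square_diff[OF _ _ Y_sq err_int]) measurable
  then have "integrable M (\<lambda>\<omega>. (f0 (X' \<omega>) (Z \<omega>))\<^sup>2)" by simp
  then have k_sq: "integrable M (\<lambda>\<omega>. (f0 (X \<omega>) (Z \<omega>) - f0 (X' \<omega>) (Z \<omega>))\<^sup>2)"
    using fX_sq by (intro integrable_square_diff) auto
  have "(\<integral>\<omega>. (Y \<omega> - f0 (X' \<omega>) (Z \<omega>))\<^sup>2 \<partial>M)
      = (\<integral>\<omega>. ((Y \<omega> - f0 (X \<omega>) (Z \<omega>)) + (f0 (X \<omega>) (Z \<omega>) - f0 (X' \<omega>) (Z \<omega>)))\<^sup>2 \<partial>M)"
    by simp
  also have "\<dots> = (\<integral>\<omega>. (Y \<omega> - f0 (X \<omega>) (Z \<omega>))\<^sup>2 \<partial>M)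
      + 2 * (\<integral>\<omega>. (Y \<omega> - f0 (X \<omega>) (Z \<omega>)) * (f0 (X \<omega>) (Z \<omega>) - f0 (X' \<omega>) (Z \<omega>)) \<partial>M)
      + (\<integral>\<omega>. (f0 (X \<omega>) (Z \<omega>) - f0 (X' \<omega>) (Z \<omega>))\<^sup>2 \<partial>M)"
    using R_sq k_sq by (intro integral_square_add) auto
  finally show ?thesis
    using integral_residual_mult_diff_eq_0[OF reg _ _ _ binary binary' Y_sq indep_YX k_sq]
      integral_square_diff_cond_copy[OF _ _ _ _ binary binary' same indep_X k_sq]
    by simp
qed

end

theorem theorem3:
  fixes M :: "'a measure" and N :: "'z measure"
    and Y Y0 Y1 X Xb :: "'a \<Rightarrow> real" and Z :: "'a \<Rightarrow> 'z"
    and f0 :: "real \<Rightarrow> 'z \<Rightarrow> real"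
  assumes "prob_space M"
    and "Z \<in> measurable M N"
    and "X \<in> borel_measurable M" and "Y \<in> borel_measurable M"
    and "Y0 \<in> borel_measurable M" and "Y1 \<in> borel_measurable M"
    and "Xb \<in> borel_measurable M"
    and binary: "\<forall>\<omega>\<in>space M. X \<omega> \<in> {0, 1}"
    and binary_b: "\<forall>\<omega>\<in>space M. Xb \<omega> \<in> {0, 1}"
    and Y_sq: "integrable M (\<lambda>\<omega>. (Y \<omega>)\<^sup>2)"
    and Y0_int: "integrable M Y0" and Y1_int: "integrable M Y1"
    and consistency: "AE \<omega> in M. Y \<omega> = (if X \<omega> = 1 then Y1 \<omega> else Y0 \<omega>)"
    and ignorability: "cond_indep M N Z (borel :: (real \<times> real) measure) (\<lambda>\<omega>. (Y0 \<omega>, Y1 \<omega>)) borel X"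
    and positivity: "AE \<omega> in M. 0 < cprob M N Z X {1} \<omega> \<and> cprob M N Z X {1} \<omega> < 1"
    and f0: "is_regression M N Y X Z f0"
    and Xb_dist: "cond_same_dist M N Z borel Xb X"
    and Xb_indep: "cond_indep M N Z borel Xb (borel :: (real \<times> real) measure) (\<lambda>\<omega>. (Y \<omega>, X \<omega>))"
    and e_cond_finite: "integrable M (\<lambda>\<omega>. (Y \<omega> - f0 (Xb \<omega>) (Z \<omega>))\<^sup>2)"
  shows "(\<integral>\<omega>. (Y \<omega> - f0 (Xb \<omega>) (Z \<omega>))\<^sup>2 \<partial>M) - (\<integral>\<omega>. (Y \<omega> - f0 (X \<omega>) (Z \<omega>))\<^sup>2 \<partial>M)
         = 2 * (\<integral>\<omega>. cvar M N Z X \<omega> * (cexp M N Z Y1 \<omega> - cexp M N Z Y0 \<omega>)\<^sup>2 \<partial>M)"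
proof -
  interpret cond_given M N Z
    using assms(1,2) by (simp add: cond_given_def cond_given_axioms_def)
  let ?p = "cprob M N Z X {1}"
  note [measurable] = assms(3-7) measurable_regression_slice[OF f0]
  have "integrable M Y" by (rule square_integrable_imp_integrable[OF _ Y_sq]) measurable
  then have effect: "AE \<omega> in M. f0 1 (Z \<omega>) - f0 0 (Z \<omega>) = cexp M N Z Y1 \<omega> - cexp M N Z Y0 \<omega>"
    using regression_contrast_eq_cexp_effect[OF f0 assms(3-6) binary _ Y0_int Y1_int
        consistency ignorability positivity] by blast
  have "(\<integral>\<omega>. cvar M N Z X \<omega> * (cexp M N Z Y1 \<omega> - cexp M N Z Y0 \<omega>)\<^sup>2 \<partial>M)
      = (\<integral>\<omega>. ?p \<omega> * (1 - ?p \<omega>) * (f0 1 (Z \<omega>) - f0 0 (Z \<omega>))\<^sup>2 \<partial>M)"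
  proof (rule integral_cong_AE)
    show "AE \<omega> in M. cvar M N Z X \<omega> * (cexp M N Z Y1 \<omega> - cexp M N Z Y0 \<omega>)\<^sup>2
        = ?p \<omega> * (1 - ?p \<omega>) * (f0 1 (Z \<omega>) - f0 0 (Z \<omega>))\<^sup>2"
      using effect cvar_binary[OF assms(3) binary] by eventually_elim simp
  qed (unfold cvar_def, measurable)+
  then show ?thesis
    using integral_excess_risk_cond_copy[OF f0 _ _ _ binary binary_b Y_sq Xb_dist Xb_indep e_cond_finite]
    by simp
qed

end
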